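(* Suppose the linear system $\dot x = A(t)x$ has a nonuniform exponential dichotomy on $\mathbb{R}_0^+$ with constants $(K,\alpha,\mu)$ and a nonuniform bounded growth on $\mathbb{R}_0^+$ with constants $(K_0,a,\varepsilon)$. Then $$a+\max\{\mu,\varepsilon\}\geq \alpha .$$
   Context: Standing setting: $A\colon\mathbb{R}_0^+=[0,+\infty)\to M_n(\mathbb{R})$ is continuous, $\Phi(t)$ is a fundamental matrix of $\dot x=A(t)x$, and $\Phi(t,s):=\Phi(t)\Phi^{-1}(s)$ is the evolution operator. $|\cdot|$ is a norm on $\mathbb{R}^n$ and $\|\cdot\|$ the induced matrix norm. Nonuniform exponential dichotomy on $\mathbb{R}_0^+$ with constants $(K,\alpha,\mu)$: there exist a projector-valued function $P(\cdot)$ (i.e. $P(t)^2=P(t)$) and constants $K\ge 1$, $\alpha>0$, $0\le\mu<\alpha$ such that for all $t,s\ge 0$: $P(t)\Phi(t,s)=\Phi(t,s)P(s)$; $\|\Phi(t,s)P(s)\|\le Ke^{-\alpha(t-s)+\mu s}$ for $t\ge s$; and $\|\Phi(t,s)(I-P(s))\|\le Ke^{\alpha(t-s)+\mu s}$ for $t\le s$. Nonuniform bounded growth on $\mathbb{R}_0^+$ with constants $(K_0,a,\varepsilon)$: there exist $K_0\ge1$, $a>0$, $\varepsilon\ge0$ with $\|\Phi(t,s)\|\le K_0e^{a|t-s|+\varepsilon s}$ for all $t,s\ge0$. *)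

theory Defs
  imports "HOL-Analysis.Analysis"
begin

definition is_norm :: "(real^'n \<Rightarrow> real) \<Rightarrow> bool" where
  "is_norm N \<longleftrightarrow> (\<forall>x. 0 \<le> N x) \<and> (\<forall>x. N x = 0 \<longleftrightarrow> x = 0)
     \<and> (\<forall>c x. N (c *\<^sub>R x) = \<bar>c\<bar> * N x) \<and> (\<forall>x y. N (x + y) \<le> N x + N y)"

definition induced_norm :: "(real^'n \<Rightarrow> real) \<Rightarrow> real^'n^'n \<Rightarrow> real" where
  "induced_norm N M = (SUP x\<in>{x. N x = 1}. N (M *v x))"

definition fundamental_matrix :: "(real \<Rightarrow> real^'n^'n) \<Rightarrow> (real \<Rightarrow> real^'n^'n) \<Rightarrow> bool" where
  "fundamental_matrix A \<Phi> \<longleftrightarrow>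
     (\<forall>t\<ge>0. (\<Phi> has_vector_derivative (A t ** \<Phi> t)) (at t within {0..}))
     \<and> (\<forall>t\<ge>0. invertible (\<Phi> t))"

definition evol :: "(real \<Rightarrow> real^'n^'n) \<Rightarrow> real \<Rightarrow> real \<Rightarrow> real^'n^'n" where
  "evol \<Phi> t s = \<Phi> t ** matrix_inv (\<Phi> s)"

definition nonuniform_exp_dichotomy ::
  "(real^'n \<Rightarrow> real) \<Rightarrow> (real \<Rightarrow> real^'n^'n) \<Rightarrow> (real \<Rightarrow> real^'n^'n) \<Rightarrow> real \<Rightarrow> real \<Rightarrow> real \<Rightarrow> bool" where
  "nonuniform_exp_dichotomy N \<Phi> P K \<alpha> \<mu> \<longleftrightarrow>
     K \<ge> 1 \<and> \<alpha> > 0 \<and> 0 \<le> \<mu> \<and> \<mu> < \<alpha>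
     \<and> (\<forall>t\<ge>0. P t ** P t = P t)
     \<and> (\<forall>t s. 0 \<le> t \<longrightarrow> 0 \<le> s \<longrightarrow> P t ** evol \<Phi> t s = evol \<Phi> t s ** P s)
     \<and> (\<forall>t s. 0 \<le> s \<longrightarrow> s \<le> t \<longrightarrow>
          induced_norm N (evol \<Phi> t s ** P s) \<le> K * exp (- \<alpha> * (t - s) + \<mu> * s))
     \<and> (\<forall>t s. 0 \<le> t \<longrightarrow> t \<le> s \<longrightarrow>
          induced_norm N (evol \<Phi> t s ** (mat 1 - P s)) \<le> K * exp (\<alpha> * (t - s) + \<mu> * s))"

definition nonuniform_bounded_growth ::
  "(real^'n \<Rightarrow> real) \<Rightarrow> (real \<Rightarrow> real^'n^'n) \<Rightarrow> real \<Rightarrow> real \<Rightarrow> real \<Rightarrow> bool" where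
  "nonuniform_bounded_growth N \<Phi> K0 a \<epsilon> \<longleftrightarrow>
     K0 \<ge> 1 \<and> a > 0 \<and> \<epsilon> \<ge> 0
     \<and> (\<forall>t s. 0 \<le> t \<longrightarrow> 0 \<le> s \<longrightarrow>
          induced_norm N (evol \<Phi> t s) \<le> K0 * exp (a * \<bar>t - s\<bar> + \<epsilon> * s))"

end

theory Submission
  imports Defs
begin

text \<open>
  If some projector \<open>P s\<close> is nonzero, take \<open>x \<noteq> 0\<close> in its range and write
  \<open>x = \<Phi>(s,t) \<Phi>(t,s) P(s) x\<close> with \<open>t = s + d\<close>. Bounded growth for the first factor
  and the stable estimate for the second give \<open>1 \<le> C exp ((a + \<epsilon> - \<alpha>) d)\<close> for all
  \<open>d \<ge> 0\<close>, hence \<open>\<alpha> \<le> a + \<epsilon>\<close>. Otherwise \<open>P = 0\<close>, so every vector is governed by the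
  unstable estimate, and \<open>x = \<Phi>(s,0) \<Phi>(0,s) x\<close> gives \<open>1 \<le> C exp ((a + \<mu> - \<alpha>) s)\<close>
  for all \<open>s \<ge> 0\<close>, hence \<open>\<alpha> \<le> a + \<mu>\<close>.
\<close>

lemma is_norm_zero: "is_norm N \<Longrightarrow> N 0 = 0"
  unfolding is_norm_def by auto

lemma is_norm_pos: "is_norm N \<Longrightarrow> x \<noteq> 0 \<Longrightarrow> N x > 0"
  unfolding is_norm_def by (metis less_eq_real_def)

lemma is_norm_minus: "is_norm N \<Longrightarrow> N (- x) = N x"
  unfolding is_norm_def by (metis abs_minus_cancel abs_one mult_1 scaleR_minus1_left)

lemma is_norm_sum:
  assumes "is_norm N" "finite S"
  shows "N (sum f S) \<le> (\<Sum>i\<in>S. N (f i))"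
  using assms(2)
proof (induction S rule: finite_induct)
  case empty
  then show ?case using is_norm_zero[OF assms(1)] by simp
next
  case (insert x F)
  have "N (sum f (insert x F)) \<le> N (f x) + N (sum f F)"
    using insert assms(1) unfolding is_norm_def by simp
  then show ?case using insert by simp
qed

lemma is_norm_le_mult_norm:
  fixes N :: "real^'n \<Rightarrow> real"
  assumes "is_norm N"
  obtains C where "C \<ge> 0" "\<And>x. N x \<le> C * norm x"
proof
  define C where "C = (\<Sum>i\<in>UNIV. N (axis i (1::real)))"
  show "C \<ge> 0" unfolding C_def using assms unfolding is_norm_def by (simp add: sum_nonneg)
  fix x :: "real^'n"
  have "N x = N (\<Sum>i\<in>UNIV. (x$i) *\<^sub>R axis i 1)"
    using basis_expansion[of x] by (simp add: scalar_mult_eq_scaleR)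
  also have "\<dots> \<le> (\<Sum>i\<in>UNIV. N ((x$i) *\<^sub>R axis i 1))"
    by (rule is_norm_sum[OF assms]) simp
  also have "\<dots> = (\<Sum>i\<in>UNIV. \<bar>x$i\<bar> * N (axis i 1))"
    using assms unfolding is_norm_def by simp
  also have "\<dots> \<le> (\<Sum>i\<in>UNIV. norm x * N (axis i 1))"
    using component_le_norm_cart assms unfolding is_norm_def
    by (intro sum_mono mult_right_mono) auto
  also have "\<dots> = C * norm x" unfolding C_def by (simp add: sum_distrib_left mult.commute)
  finally show "N x \<le> C * norm x" .
qed

lemma continuous_on_is_norm:
  fixes N :: "real^'n \<Rightarrow> real"
  assumes "is_norm N"
  shows "continuous_on UNIV N"
proof -
  obtain C where C: "C \<ge> 0" "\<And>x. N x \<le> C * norm x" using is_norm_le_mult_norm[OF assms] by blast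
  have "\<bar>N x - N y\<bar> \<le> C * norm (x - y)" for x y
  proof -
    have "N x \<le> N (x - y) + N y" "N y \<le> N (y - x) + N x"
      using assms unfolding is_norm_def by (metis diff_add_cancel)+
    moreover have "N (y - x) = N (x - y)" using is_norm_minus[OF assms, of "x - y"] by simp
    ultimately have "\<bar>N x - N y\<bar> \<le> N (x - y)" by linarith
    then show ?thesis using C(2) order_trans by blast
  qed
  then have "C-lipschitz_on UNIV N"
    unfolding lipschitz_on_def using C(1) by (simp add: dist_norm)
  then show ?thesis by (rule lipschitz_on_continuous_on)
qed

text \<open>The reverse comparison comes from the minimum of \<open>N\<close> on the compact unit sphere.\<close>

lemma is_norm_ge_mult_norm:
  fixes N :: "real^'n \<Rightarrow> real"
  assumes "is_norm N"
  obtains c where "c > 0" "\<And>x. c * norm x \<le> N x"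
proof -
  have "norm (axis undefined (1::real) :: real^'n) = 1" by simp
  then have "sphere (0::real^'n) 1 \<noteq> {}" by (metis dist_0_norm mem_sphere empty_iff)
  then obtain x0 where x0: "x0 \<in> sphere 0 1" "\<And>y. y \<in> sphere 0 1 \<Longrightarrow> N x0 \<le> N y"
    using continuous_attains_inf[OF compact_sphere _ continuous_on_subset[OF continuous_on_is_norm[OF assms]]]
    by blast
  have "x0 \<noteq> 0" using x0(1) by auto
  have "N x0 * norm x \<le> N x" for x
  proof (cases "x = 0")
    case True
    then show ?thesis using is_norm_zero[OF assms] by simp
  next
    case False
    then have "N x0 \<le> N ((1 / norm x) *\<^sub>R x)" by (intro x0(2)) simp
    also have "\<dots> = N x / norm x" using assms unfolding is_norm_def by simp
    finally show ?thesis using False by (simp add: field_simps)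
  qed
  with is_norm_pos[OF assms \<open>x0 \<noteq> 0\<close>] that show thesis by blast
qed

lemma bdd_above_induced_norm:
  fixes N :: "real^'n \<Rightarrow> real" and M :: "real^'n^'n"
  assumes "is_norm N"
  shows "bdd_above ((\<lambda>x. N (M *v x)) ` {x. N x = 1})"
proof -
  obtain C where C: "C \<ge> 0" "\<And>x. N x \<le> C * norm x" using is_norm_le_mult_norm[OF assms] by blast
  obtain c where c: "c > 0" "\<And>x. c * norm x \<le> N x" using is_norm_ge_mult_norm[OF assms] by blast
  obtain B where B: "\<And>x. norm (M *v x) \<le> norm x * B" "B > 0"
    using bounded_linear.pos_bounded[OF matrix_vector_mul_bounded_linear] by blast
  have "N (M *v x) \<le> C * (1 / c * B)" if "N x = 1" for x
  proof -
    have "norm x \<le> 1 / c" using c(2)[of x] c(1) that by (simp add: field_simps)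
    then have "norm (M *v x) \<le> 1 / c * B" using B by (meson mult_right_mono less_imp_le order_trans)
    then show ?thesis using C by (meson mult_left_mono order_trans)
  qed
  then show ?thesis unfolding bdd_above_def by blast
qed

lemma induced_norm_mult_le:
  fixes N :: "real^'n \<Rightarrow> real" and M :: "real^'n^'n"
  assumes "is_norm N"
  shows "N (M *v x) \<le> induced_norm N M * N x"
proof (cases "x = 0")
  case True
  then show ?thesis using is_norm_zero[OF assms] by simp
next
  case False
  then have pos: "N x > 0" by (rule is_norm_pos[OF assms])
  define u where "u = (1 / N x) *\<^sub>R x"
  have "N u = 1" unfolding u_def using assms pos False unfolding is_norm_def by simp
  then have "N (M *v u) \<le> induced_norm N M"
    unfolding induced_norm_def by (intro cSUP_upper bdd_above_induced_norm[OF assms]) simp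
  moreover have "N (M *v u) = N (M *v x) / N x"
    unfolding u_def using assms pos False unfolding is_norm_def by (simp add: matrix_vector_mult_scaleR)
  ultimately show ?thesis using pos by (simp add: field_simps)
qed

lemma induced_norm_nonneg:
  fixes N :: "real^'n \<Rightarrow> real" and M :: "real^'n^'n"
  assumes "is_norm N"
  shows "induced_norm N M \<ge> 0"
proof -
  define u :: "real^'n" where "u = axis undefined 1"
  have pos: "N u > 0" unfolding u_def by (intro is_norm_pos[OF assms]) (simp add: axis_eq_0_iff)
  have "0 \<le> N (M *v u)" using assms unfolding is_norm_def by blast
  also have "\<dots> \<le> induced_norm N M * N u" by (rule induced_norm_mult_le[OF assms])
  finally show ?thesis using pos by (simp add: zero_le_mult_iff)
qed

lemma one_le_induced_norm_bounds_of_fixed_vector: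
  fixes N :: "real^'n \<Rightarrow> real" and E1 E2 :: "real^'n^'n"
  assumes "is_norm N" "x \<noteq> 0" "E1 *v (E2 *v x) = x"
    and "induced_norm N E1 \<le> B1" "induced_norm N E2 \<le> B2"
  shows "1 \<le> B1 * B2"
proof -
  note nonneg = induced_norm_nonneg[OF assms(1)]
  have "N x \<le> induced_norm N E1 * N (E2 *v x)"
    using induced_norm_mult_le[OF assms(1), of E1 "E2 *v x"] assms(3) by simp
  also have "\<dots> \<le> induced_norm N E1 * (induced_norm N E2 * N x)"
    by (intro mult_left_mono induced_norm_mult_le[OF assms(1)] nonneg)
  also have "\<dots> \<le> B1 * (B2 * N x)"
    using assms(4,5) is_norm_pos[OF assms(1,2)] nonneg[of E1] nonneg[of E2]
    by (intro mult_mono mult_right_mono) auto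
  finally show ?thesis using is_norm_pos[OF assms(1,2)] by (simp add: mult.assoc)
qed

lemma matrix_inv_right:
  fixes M :: "'a::semiring_1^'n^'m"
  assumes "invertible M"
  shows "M ** matrix_inv M = mat 1"
  using someI_ex[OF assms[unfolded invertible_def]] unfolding matrix_inv_def by blast

lemma matrix_inv_left:
  fixes M :: "'a::semiring_1^'n^'m"
  assumes "invertible M"
  shows "matrix_inv M ** M = mat 1"
  using someI_ex[OF assms[unfolded invertible_def]] unfolding matrix_inv_def by blast

lemma evol_mult_evol:
  assumes "fundamental_matrix A \<Phi>" "s \<ge> 0" "t \<ge> 0"
  shows "evol \<Phi> s t ** evol \<Phi> t s = mat 1"
proof -
  have "invertible (\<Phi> t)" "invertible (\<Phi> s)"
    using assms unfolding fundamental_matrix_def by auto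
  have "evol \<Phi> s t ** evol \<Phi> t s = \<Phi> s ** (matrix_inv (\<Phi> t) ** \<Phi> t) ** matrix_inv (\<Phi> s)"
    unfolding evol_def by (simp add: matrix_mul_assoc)
  then show ?thesis using \<open>invertible (\<Phi> t)\<close> \<open>invertible (\<Phi> s)\<close>
    by (simp add: matrix_inv_left matrix_inv_right matrix_mul_rid)
qed

lemma exp_rate_nonneg_if_bounded_below:
  fixes C c :: real
  assumes "\<And>d. d \<ge> 0 \<Longrightarrow> 1 \<le> C * exp (c * d)"
  shows "c \<ge> 0"
proof (rule ccontr)
  assume "\<not> c \<ge> 0"
  then have "filterlim (\<lambda>d. c * d) at_bot at_top"
    by (intro filterlim_tendsto_neg_mult_at_bot[OF tendsto_const] filterlim_ident) simp
  then have "((\<lambda>d. C * exp (c * d)) \<longlongrightarrow> C * 0) at_top"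
    by (intro tendsto_mult_left filterlim_compose[OF exp_at_bot])
  then have "\<forall>\<^sub>F d in at_top. C * exp (c * d) < 1 \<and> d \<ge> 0"
    by (intro eventually_conj eventually_ge_at_top order_tendstoD(2)) auto
  then obtain d where "C * exp (c * d) < 1" "d \<ge> 0"
    using eventually_happens by force
  with assms show False by force
qed

lemma dichotomy_rate_le_if_nonzero_projector:
  assumes "fundamental_matrix A \<Phi>" "is_norm N"
    and "nonuniform_exp_dichotomy N \<Phi> P K \<alpha> \<mu>"
    and "nonuniform_bounded_growth N \<Phi> K0 a \<epsilon>"
    and "s \<ge> 0" "P s \<noteq> 0"
  shows "\<alpha> \<le> a + \<epsilon>"
proof -
  note D = assms(3)[unfolded nonuniform_exp_dichotomy_def]
  note G = assms(4)[unfolded nonuniform_bounded_growth_def]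
  obtain y where "P s *v y \<noteq> 0" using assms(6) by (metis matrix_eq matrix_vector_mult_0)
  define x where "x = P s *v y"
  have "x \<noteq> 0" using \<open>P s *v y \<noteq> 0\<close> x_def by simp
  have Px: "P s *v x = x" unfolding x_def using D assms(5) by (simp add: matrix_vector_mul_assoc)
  have "1 \<le> (K0 * K * exp ((\<epsilon> + \<mu>) * s)) * exp ((a + \<epsilon> - \<alpha>) * d)" if "d \<ge> 0" for d
  proof -
    define t where "t = s + d"
    have "t \<ge> 0" "s \<le> t" using assms(5) that t_def by auto
    have "evol \<Phi> s t *v ((evol \<Phi> t s ** P s) *v x) = x"
      using evol_mult_evol[OF assms(1,5) \<open>t \<ge> 0\<close>] Px
      by (simp add: matrix_vector_mul_assoc matrix_mul_assoc)
    moreover have "induced_norm N (evol \<Phi> s t) \<le> K0 * exp (a * \<bar>s - t\<bar> + \<epsilon> * t)"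
      using G assms(5) \<open>t \<ge> 0\<close> by blast
    moreover have "induced_norm N (evol \<Phi> t s ** P s) \<le> K * exp (- \<alpha> * (t - s) + \<mu> * s)"
      using D assms(5) \<open>s \<le> t\<close> by blast
    ultimately have "1 \<le> K0 * exp (a * \<bar>s - t\<bar> + \<epsilon> * t) * (K * exp (- \<alpha> * (t - s) + \<mu> * s))"
      using one_le_induced_norm_bounds_of_fixed_vector[OF assms(2) \<open>x \<noteq> 0\<close>] by blast
    also have "\<dots> = K0 * K * exp ((\<epsilon> + \<mu>) * s) * exp ((a + \<epsilon> - \<alpha>) * d)"
      unfolding t_def using that by (simp add: mult_exp_exp algebra_simps)
    finally show ?thesis .
  qed
  then have "a + \<epsilon> - \<alpha> \<ge> 0" by (rule exp_rate_nonneg_if_bounded_below)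
  then show ?thesis by simp
qed

lemma dichotomy_rate_le_if_zero_projector:
  assumes "fundamental_matrix A \<Phi>" "is_norm N"
    and "nonuniform_exp_dichotomy N \<Phi> P K \<alpha> \<mu>"
    and "nonuniform_bounded_growth N \<Phi> K0 a \<epsilon>"
    and "\<And>s. s \<ge> 0 \<Longrightarrow> P s = 0"
  shows "\<alpha> \<le> a + \<mu>"
proof -
  note D = assms(3)[unfolded nonuniform_exp_dichotomy_def]
  note G = assms(4)[unfolded nonuniform_bounded_growth_def]
  define x :: "real^'a" where "x = axis undefined 1"
  have "x \<noteq> 0" unfolding x_def by (simp add: axis_eq_0_iff)
  have "1 \<le> K0 * K * exp ((a + \<mu> - \<alpha>) * s)" if "s \<ge> 0" for s
  proof -
    have "evol \<Phi> s 0 *v ((evol \<Phi> 0 s ** (mat 1 - P s)) *v x) = x"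
      using evol_mult_evol[OF assms(1) that order_refl] assms(5)[OF that]
      by (simp add: matrix_vector_mul_assoc matrix_mul_assoc)
    moreover have "induced_norm N (evol \<Phi> s 0) \<le> K0 * exp (a * \<bar>s - 0\<bar> + \<epsilon> * 0)"
      using G that by blast
    moreover have "induced_norm N (evol \<Phi> 0 s ** (mat 1 - P s)) \<le> K * exp (\<alpha> * (0 - s) + \<mu> * s)"
      using D that by blast
    ultimately have "1 \<le> K0 * exp (a * \<bar>s - 0\<bar> + \<epsilon> * 0) * (K * exp (\<alpha> * (0 - s) + \<mu> * s))"
      using one_le_induced_norm_bounds_of_fixed_vector[OF assms(2) \<open>x \<noteq> 0\<close>] by blast
    also have "\<dots> = K0 * K * exp ((a + \<mu> - \<alpha>) * s)"
      using that by (simp add: mult_exp_exp algebra_simps)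
    finally show ?thesis .
  qed
  then have "a + \<mu> - \<alpha> \<ge> 0" by (rule exp_rate_nonneg_if_bounded_below)
  then show ?thesis by simp
qed

theorem mainTheorem1:
  fixes A \<Phi> P :: "real \<Rightarrow> real^'n^'n" and N :: "real^'n \<Rightarrow> real"
    and K \<alpha> \<mu> K0 a \<epsilon> :: real
  assumes "continuous_on {0..} A"
    and "fundamental_matrix A \<Phi>"
    and "is_norm N"
    and "nonuniform_exp_dichotomy N \<Phi> P K \<alpha> \<mu>"
    and "nonuniform_bounded_growth N \<Phi> K0 a \<epsilon>"
  shows "a + max \<mu> \<epsilon> \<ge> \<alpha>"
proof (cases "\<exists>s\<ge>0. P s \<noteq> 0")
  case True
  then obtain s where "s \<ge> 0" "P s \<noteq> 0" by blast
  with assms(2-5) have "\<alpha> \<le> a + \<epsilon>" by (rule dichotomy_rate_le_if_nonzero_projector)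
  then show ?thesis by linarith
next
  case False
  then have "\<alpha> \<le> a + \<mu>"
    by (intro dichotomy_rate_le_if_zero_projector[OF assms(2-5)]) blast
  then show ?thesis by linarith
qed

end
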